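(* Let $M=\{0,1\}$ be the commutative monoid under multiplication. Then the simplicial set $K(M,2)$ is not a Skvortsov–Shehtman complex; specifically, it fails the Beck–Chevalley condition $\mathrm{BC}_{0,3}[5]$.
   Context: For a commutative monoid $M$ (written multiplicatively), $K(M,2)$ is the simplicial set whose $n$-simplices are families $(a_{ijk})_{0\le i<j<k\le n}$ of elements of $M$ satisfying $a_{ikl}a_{ijk}=a_{ijl}a_{jkl}$ for all $0\le i<j<k<l\le n$; the $j$-th face map omits all entries involving the index $j$ (and reindexes), and the $j$-th degeneracy map repeats the index $j$, inserting the unit of $M$ at the new entries. The Beck–Chevalley condition $\mathrm{BC}_{p,q}[n]$ ($n>1$, $0\le p<q\le n$) on a simplicial set $S$: for any $(n-1)$-simplices $c_p,c_q$ of $S$ with $d_pc_q=d_{q-1}c_p$ there exists an $n$-simplex $x$ of $S$ with $d_px=c_p$ and $d_qx=c_q$. $S$ is a Skvortsov–Shehtman complex if it satisfies all $\mathrm{BC}_{p,q}[n]$. *)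

theory Defs
  imports Main
begin

text \<open>An n-simplex of K(M,2) is represented as a function a :: nat => nat => nat => 'a,
  where a i j k is the entry a_{ijk} for 0 <= i < j < k <= n; all other entries are
  normalised to the unit (so that simplices are determined by their genuine entries).\<close>

definition K2 :: "'a set \<Rightarrow> ('a \<Rightarrow> 'a \<Rightarrow> 'a) \<Rightarrow> 'a \<Rightarrow> nat \<Rightarrow> (nat \<Rightarrow> nat \<Rightarrow> nat \<Rightarrow> 'a) set" where
  "K2 M mult e n = {a.
     (\<forall>i j k. i < j \<and> j < k \<and> k \<le> n \<longrightarrow> a i j k \<in> M) \<and>
     (\<forall>i j k. \<not> (i < j \<and> j < k \<and> k \<le> n) \<longrightarrow> a i j k = e) \<and>
     (\<forall>i j k l. i < j \<and> j < k \<and> k < l \<and> l \<le> n \<longrightarrow>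
         mult (a i k l) (a i j k) = mult (a i j l) (a j k l))}"

definition skip :: "nat \<Rightarrow> nat \<Rightarrow> nat" where
  "skip p m = (if m < p then m else Suc m)"

definition K2_face :: "'a \<Rightarrow> nat \<Rightarrow> nat \<Rightarrow> (nat \<Rightarrow> nat \<Rightarrow> nat \<Rightarrow> 'a) \<Rightarrow> (nat \<Rightarrow> nat \<Rightarrow> nat \<Rightarrow> 'a)" where
  "K2_face e n p a = (\<lambda>i j k. if i < j \<and> j < k \<and> k \<le> n - 1
        then a (skip p i) (skip p j) (skip p k) else e)"

text \<open>Beck--Chevalley condition BC_{p,q}[n] for a simplicial set given by its sets of
  simplices X n and face maps d n j : X n -> X (n-1).\<close>
definition BC :: "(nat \<Rightarrow> 's set) \<Rightarrow> (nat \<Rightarrow> nat \<Rightarrow> 's \<Rightarrow> 's) \<Rightarrow> nat \<Rightarrow> nat \<Rightarrow> nat \<Rightarrow> bool" where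
  "BC X d p q n = (\<forall>cp \<in> X (n - 1). \<forall>cq \<in> X (n - 1).
      d (n - 1) p cq = d (n - 1) (q - 1) cp \<longrightarrow>
      (\<exists>x \<in> X n. d n p x = cp \<and> d n q x = cq))"

definition SS_complex :: "(nat \<Rightarrow> 's set) \<Rightarrow> (nat \<Rightarrow> nat \<Rightarrow> 's \<Rightarrow> 's) \<Rightarrow> bool" where
  "SS_complex X d = (\<forall>n p q. 1 < n \<and> p < q \<and> q \<le> n \<longrightarrow> BC X d p q n)"

end

theory Submission
  imports Defs
begin

text \<open>A 5-simplex x with faces d_0 x = c0 and d_3 x = c3 would satisfy the cocycle
  identities for the index quadruples 0135, 0234 and 0134. Their right-hand sides are read off the two given faces
  and equal 1, 1 and 0; the entries x_013, x_034 of the left-hand sides involve both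
  omitted vertices and are free. But a product of naturals equals 1 only if both factors do,
  so the first two identities force x_013 = x_034 = 1, and the third becomes 1 = 0.\<close>

lemma K2_face_apply [simp]:
  "i < j \<Longrightarrow> j < k \<Longrightarrow> k \<le> n - 1 \<Longrightarrow>
    K2_face e n p a i j k = a (skip p i) (skip p j) (skip p k)"
  by (simp add: K2_face_def)

lemma K2_cocycle:
  assumes "a \<in> K2 M mult e n" and "i < j" "j < k" "k < l" "l \<le> n"
  shows "mult (a i k l) (a i j k) = mult (a i j l) (a j k l)"
  using assms unfolding K2_def by blast

lemma SS_complex_BC:
  "SS_complex X d \<Longrightarrow> 1 < n \<Longrightarrow> p < q \<Longrightarrow> q \<le> n \<Longrightarrow> BC X d p q n"
  unfolding SS_complex_def by blast

definition c0 :: "nat \<Rightarrow> nat \<Rightarrow> nat \<Rightarrow> nat" where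
  "c0 i j k =
    (if (i, j, k) \<in> {(0,1,2), (0,1,3), (0,1,4), (0,2,3), (0,3,4), (1,3,4), (2,3,4)} then 0 else 1)"

definition c3 :: "nat \<Rightarrow> nat \<Rightarrow> nat \<Rightarrow> nat" where
  "c3 i j k =
    (if (i, j, k) \<in> {(0,1,2), (0,3,4), (1,2,3), (1,2,4), (1,3,4), (2,3,4)} then 0 else 1)"

lemma c0_K2: "c0 \<in> K2 {0, 1} (*) 1 4"
  unfolding K2_def c0_def
  by (auto simp: less_Suc_eq le_Suc_eq numeral_eq_Suc)

lemma c3_K2: "c3 \<in> K2 {0, 1} (*) 1 4"
  unfolding K2_def c3_def
  by (auto simp: less_Suc_eq le_Suc_eq numeral_eq_Suc)

lemma c0_c3_compatible: "K2_face 1 4 0 c3 = K2_face 1 4 2 c0"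
  unfolding K2_face_def skip_def c0_def c3_def
  by (intro ext) (auto simp: less_Suc_eq le_Suc_eq numeral_eq_Suc)

lemma c0_c3_no_filler:
  assumes "x \<in> K2 {0, 1} (*) 1 5" and "K2_face 1 5 0 x = c0" and "K2_face 1 5 3 x = c3"
  shows False
proof -
  have face0: "x (Suc i) (Suc j) (Suc k) = c0 i j k" if "i < j" "j < k" "k \<le> 4" for i j k
    using that fun_cong[OF fun_cong[OF fun_cong[OF assms(2)]], of i j k]
    by (simp add: skip_def)
  have face3: "x (skip 3 i) (skip 3 j) (skip 3 k) = c3 i j k" if "i < j" "j < k" "k \<le> 4" for i j k
    using that fun_cong[OF fun_cong[OF fun_cong[OF assms(3)]], of i j k] by simp
  have cocycle: "x i k l * x i j k = x i j l * x j k l"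
    if "i < j" "j < k" "k < l" "l \<le> 5" for i j k l
    using K2_cocycle[OF assms(1) that] .
  have "x 0 3 5 * x 0 1 3 = x 0 1 5 * x 1 3 5" by (rule cocycle) auto
  also have "\<dots> = 1"
    using face3[of 0 1 4] face0[of 0 2 4] by (simp add: skip_def c0_def c3_def)
  finally have x013: "x 0 1 3 = 1" by simp
  have "x 0 3 4 * x 0 2 3 = x 0 2 4 * x 2 3 4" by (rule cocycle) auto
  also have "\<dots> = 1"
    using face3[of 0 2 3] face0[of 1 2 3] by (simp add: skip_def c0_def c3_def numeral_eq_Suc)
  finally have x034: "x 0 3 4 = 1" by simp
  have "x 0 3 4 * x 0 1 3 = x 0 1 4 * x 1 3 4" by (rule cocycle) auto
  also have "\<dots> = 0"
    using face0[of 0 2 3] by (simp add: c0_def)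
  finally show False using x013 x034 by simp
qed

theorem mainTheorem2:
  shows "\<not> SS_complex (K2 {0::nat, 1} (*) 1) (K2_face 1)
       \<and> \<not> BC (K2 {0::nat, 1} (*) 1) (K2_face 1) 0 3 5"
proof -
  have "\<not> BC (K2 {0::nat, 1} (*) 1) (K2_face 1) 0 3 5"
    unfolding BC_def using c0_K2 c3_K2 c0_c3_compatible c0_c3_no_filler by auto
  then show ?thesis using SS_complex_BC by force
qed

end
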